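(* For every $n\in\mathbb N$, Thompson's group $F$ acts transitively, via $f\cdot x=\iota(f)(x)$, on the set \[ \Sigma_n=\{(x_1,\ldots,x_n)\in(\{0,1\}^* )^n : x_1 <_{\rm lex} x_2 <_{\rm lex}\cdots<_{\rm lex} x_n\}. \]
   Context: Let $\{0,1\}^*$ be the finite words over $\{0,1\}$ (empty word $\varepsilon$). Order $\{0,1\}^*$ by $\le_{\rm lex}$: for words $x,y$ append the infinite string $\tfrac12\tfrac12\cdots$ to each and compare the results lexicographically with $0<\tfrac12<1$ (so e.g. $00<_{\rm lex}0<_{\rm lex}01$). A finite rooted binary subtree is a finite prefix-closed set of words containing $\varepsilon$ in which each element has both or neither of its children $x0,x1$; its leaves are the elements with no children and its nodes the others. Thompson's group $F$ is the group of homeomorphisms $f$ of $\{0,1\}^{\mathbb N}$ for which there are finite rooted binary subtrees $L,R$ with leaves $\ell_1<_{\rm lex}\cdots<_{\rm lex}\ell_k$ and $r_1<_{\rm lex}\cdots<_{\rm lex}r_k$ such that $f(\ell_i\omega)=r_i\omega$. For such $f$, let $\iota(f)$ be the bijection of $\{0,1\}^*$ sending the $i$-th node of $L$ (in $\le_{\rm lex}$ order) to the $i$-th node of $R$, and sending $\ell_i s\mapsto r_i s$ for all words $s$; this is independent of the choice of $(L,R)$ and defines an action of $F$ on $\{0,1\}^*$. *)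

theory Defs
  imports "HOL-Analysis.Analysis"
begin

text \<open>Words over {0,1} are bool lists (False = 0, True = 1).
  Lex order: pad with the infinite string 1/2 1/2 ... and compare
  lexicographically with 0 < 1/2 < 1; we code letters as 0, 1, 2 (1 = one half).\<close>

definition padded :: "bool list \<Rightarrow> nat \<Rightarrow> nat" where
  "padded x i = (if i < length x then (if x ! i then 2 else 0) else 1)"

definition lex_less :: "bool list \<Rightarrow> bool list \<Rightarrow> bool" where
  "lex_less x y \<longleftrightarrow>
     (\<exists>k. (\<forall>i<k. padded x i = padded y i) \<and> padded x k < padded y k)"

definition is_tree :: "bool list set \<Rightarrow> bool" where
  "is_tree T \<longleftrightarrow> finite T \<and> [] \<in> T \<and>
     (\<forall>x s. x @ s \<in> T \<longrightarrow> x \<in> T) \<and>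
     (\<forall>x\<in>T. (x @ [False] \<in> T) = (x @ [True] \<in> T))"

definition leaves :: "bool list set \<Rightarrow> bool list set" where
  "leaves T = {x \<in> T. x @ [False] \<notin> T \<and> x @ [True] \<notin> T}"

definition nodes :: "bool list set \<Rightarrow> bool list set" where
  "nodes T = T - leaves T"

definition lex_enum :: "bool list set \<Rightarrow> bool list list" where
  "lex_enum A = (THE xs. sorted_wrt lex_less xs \<and> set xs = A)"

definition cat :: "bool list \<Rightarrow> (nat \<Rightarrow> bool) \<Rightarrow> (nat \<Rightarrow> bool)" where
  "cat l \<omega> = (\<lambda>n. if n < length l then l ! n else \<omega> (n - length l))"

definition represents :: "bool list set \<Rightarrow> bool list set \<Rightarrow> ((nat \<Rightarrow> bool) \<Rightarrow> (nat \<Rightarrow> bool)) \<Rightarrow> bool" where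
  "represents L R f \<longleftrightarrow> is_tree L \<and> is_tree R \<and> card (leaves L) = card (leaves R) \<and>
     (\<forall>i < card (leaves L). \<forall>\<omega>. f (cat (lex_enum (leaves L) ! i) \<omega>) = cat (lex_enum (leaves R) ! i) \<omega>)"

definition thompsonF :: "((nat \<Rightarrow> bool) \<Rightarrow> (nat \<Rightarrow> bool)) set" where
  "thompsonF = {f. (\<exists>g. homeomorphism UNIV UNIV f g) \<and> (\<exists>L R. represents L R f)}"

definition iota_pair :: "bool list set \<Rightarrow> bool list set \<Rightarrow> bool list \<Rightarrow> bool list" where
  "iota_pair L R x =
     (if x \<in> nodes L then
        lex_enum (nodes R) ! (THE i. i < length (lex_enum (nodes L)) \<and> lex_enum (nodes L) ! i = x)
      else
        (let i = (THE i. i < length (lex_enum (leaves L)) \<and>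
                         (\<exists>s. x = lex_enum (leaves L) ! i @ s))
         in lex_enum (leaves R) ! i @ drop (length (lex_enum (leaves L) ! i)) x))"

text \<open>iota(f), defined via any representing tree pair (independent of the choice).\<close>

definition iota :: "((nat \<Rightarrow> bool) \<Rightarrow> (nat \<Rightarrow> bool)) \<Rightarrow> bool list \<Rightarrow> bool list" where
  "iota f = iota_pair (fst (SOME p. represents (fst p) (snd p) f))
                      (snd (SOME p. represents (fst p) (snd p) f))"

definition Sigma_n :: "nat \<Rightarrow> bool list list set" where
  "Sigma_n n = {xs. length xs = n \<and> sorted_wrt lex_less xs}"

end

theory Submission
  imports Defs
begin

text \<open>Encode a word x by the dyadic interval [0.x, 0.x + 2^-|x|]: lex order is the order of the
  midpoints, and the midpoint of x is the binary value of the sequence x 1 0 0 0 ... If the tree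
  pair (L, R) represents f, the i-th leaf interval of L is mapped affinely onto the i-th leaf
  interval of R, the node midpoints being the inner endpoints of these tilings; so the midpoint of
  iota f x is the binary value of f (x 1 0 0 0 ...). Thus iota f is independent of the tree pair,
  and it preserves lex order because f is increasing for the binary value.

  For transitivity, take trees L and R having the entries of xs, resp. ys, among their nodes, and
  split leaves in the gaps between consecutive entries until each gap of xs contains as many nodes
  of L as the corresponding gap of ys contains nodes of R. Then x_m and y_m have the same rank
  among the nodes, L and R have equally many leaves, and the tree pair (L, R) maps x_m to y_m.\<close>

section \<open>Dyadic intervals and lex order\<close>

text \<open>The word x codes the dyadic interval [dlo x, dlo x + dwidth x] of [0,1].\<close>

fun dlo :: "bool list \<Rightarrow> real" where
  "dlo [] = 0"
| "dlo (b # x) = (if b then 1/2 else 0) + dlo x / 2"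

definition dwidth :: "bool list \<Rightarrow> real" where
  "dwidth x = (1/2) ^ length x"

definition dmid :: "bool list \<Rightarrow> real" where
  "dmid x = dlo x + dwidth x / 2"

lemma dwidth_Nil [simp]: "dwidth [] = 1"
  by (simp add: dwidth_def)

lemma dwidth_Cons [simp]: "dwidth (b # x) = dwidth x / 2"
  by (simp add: dwidth_def)

lemma dwidth_pos: "0 < dwidth x"
  by (simp add: dwidth_def)

lemma dwidth_append: "dwidth (x @ y) = dwidth x * dwidth y"
  by (simp add: dwidth_def power_add)

lemma dlo_append: "dlo (x @ y) = dlo x + dwidth x * dlo y"
  by (induct x) (auto simp: field_simps)

lemma dmid_append: "dmid (x @ y) = dlo x + dwidth x * dmid y"
  by (simp add: dmid_def dlo_append dwidth_append field_simps)

lemma dlo_dwidth_bounds: "0 \<le> dlo x \<and> dlo x + dwidth x \<le> 1"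
  by (induct x) auto

lemma dmid_bounds: "dlo x < dmid x \<and> dmid x < dlo x + dwidth x"
  using dwidth_pos[of x] by (simp add: dmid_def)

lemma dmid_Nil [simp]: "dmid [] = 1/2"
  by (simp add: dmid_def)

lemma dmid_Cons [simp]: "dmid (b # x) = (if b then 1/2 else 0) + dmid x / 2"
  by (simp add: dmid_def)

lemma dmid_gt_0_lt_1: "0 < dmid x \<and> dmid x < 1"
  using dmid_bounds[of x] dlo_dwidth_bounds[of x] by linarith

lemma padded_Nil [simp]: "padded [] i = 1"
  by (simp add: padded_def)

lemma padded_Cons_0 [simp]: "padded (b # x) 0 = (if b then 2 else 0)"
  by (simp add: padded_def)

lemma padded_Cons_Suc [simp]: "padded (b # x) (Suc i) = padded x i"
  by (simp add: padded_def)

lemma first_difference_less_iff: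
  fixes p q :: "nat \<Rightarrow> nat"
  shows "(\<exists>k. (\<forall>i<k. p i = q i) \<and> p k < q k) \<longleftrightarrow>
    p 0 < q 0 \<or> (p 0 = q 0 \<and> (\<exists>k. (\<forall>i<k. p (Suc i) = q (Suc i)) \<and> p (Suc k) < q (Suc k)))"
    (is "?lhs \<longleftrightarrow> ?rhs")
proof
  assume ?lhs
  then obtain k where k: "\<forall>i<k. p i = q i" "p k < q k" by blast
  show ?rhs
  proof (cases k)
    case (Suc k')
    then show ?thesis using k by (intro disjI2 conjI exI[of _ k']) auto
  qed (use k in auto)
next
  assume ?rhs
  then show ?lhs
  proof
    assume "p 0 = q 0 \<and> (\<exists>k. (\<forall>i<k. p (Suc i) = q (Suc i)) \<and> p (Suc k) < q (Suc k))"
    then obtain k where "p 0 = q 0" "\<forall>i<k. p (Suc i) = q (Suc i)" "p (Suc k) < q (Suc k)"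
      by blast
    then show ?lhs by (intro exI[of _ "Suc k"]) (auto simp: less_Suc_eq_0_disj)
  qed auto
qed

lemma lex_less_unfold:
  "lex_less x y \<longleftrightarrow> padded x 0 < padded y 0 \<or> (padded x 0 = padded y 0 \<and>
     (\<exists>k. (\<forall>i<k. padded x (Suc i) = padded y (Suc i)) \<and> padded x (Suc k) < padded y (Suc k)))"
  unfolding lex_less_def by (rule first_difference_less_iff)

lemma lex_less_Nil_Nil [simp]: "\<not> lex_less [] []"
  by (simp add: lex_less_def)

lemma lex_less_Nil_Cons [simp]: "lex_less [] (b # y) \<longleftrightarrow> b"
  by (subst lex_less_unfold) auto

lemma lex_less_Cons_Nil [simp]: "lex_less (a # x) [] \<longleftrightarrow> \<not> a"
  by (subst lex_less_unfold) auto

lemma lex_less_Cons_Cons [simp]: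
  "lex_less (a # x) (b # y) \<longleftrightarrow> (\<not> a \<and> b) \<or> (a = b \<and> lex_less x y)"
  by (subst lex_less_unfold) (auto simp: lex_less_def)

lemma lex_less_iff_dmid_less: "lex_less x y \<longleftrightarrow> dmid x < dmid y"
proof (induct x arbitrary: y)
  case Nil
  show ?case
  proof (cases y)
    case (Cons b y')
    then show ?thesis using dmid_gt_0_lt_1[of y'] by auto
  qed auto
next
  case (Cons a x)
  show ?case
  proof (cases y)
    case (Cons b y')
    then show ?thesis using dmid_gt_0_lt_1[of x] dmid_gt_0_lt_1[of y'] Cons.hyps[of y'] by auto
  qed (use dmid_gt_0_lt_1[of x] in auto)
qed

lemma inj_dmid: "inj dmid"
proof (rule injI)
  show "x = y" if "dmid x = dmid y" for x y
    using that
  proof (induct x arbitrary: y)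
    case Nil
    show ?case
    proof (cases y)
      case (Cons b y')
      then show ?thesis using Nil dmid_gt_0_lt_1[of y'] by (cases b) auto
    qed auto
  next
    case (Cons a x)
    show ?case
    proof (cases y)
      case (Cons b y')
      then show ?thesis using Cons.prems dmid_gt_0_lt_1[of x] dmid_gt_0_lt_1[of y'] Cons.hyps[of y']
        by (cases a; cases b) auto
    qed (use Cons.prems dmid_gt_0_lt_1[of x] in \<open>auto split: if_splits\<close>)
  qed
qed

lemma lex_less_irrefl [simp]: "\<not> lex_less x x"
  by (simp add: lex_less_iff_dmid_less)

lemma lex_less_trans: "lex_less x y \<Longrightarrow> lex_less y z \<Longrightarrow> lex_less x z"
  by (simp add: lex_less_iff_dmid_less)

lemma lex_less_asym: "lex_less x y \<Longrightarrow> \<not> lex_less y x"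
  by (simp add: lex_less_iff_dmid_less)

lemma lex_less_linear: "x \<noteq> y \<Longrightarrow> lex_less x y \<or> lex_less y x"
  using inj_dmid by (metis injD lex_less_iff_dmid_less linorder_neqE_linordered_idom)

lemma sorted_lex_iff_sorted_dmid: "sorted_wrt lex_less xs \<longleftrightarrow> sorted_wrt (<) (map dmid xs)"
  by (induct xs) (auto simp: lex_less_iff_dmid_less)

lemma sorted_lex_distinct: "sorted_wrt lex_less xs \<Longrightarrow> distinct xs"
  by (simp add: sorted_lex_iff_sorted_dmid strict_sorted_iff distinct_map)

lemma sorted_lex_unique:
  assumes "sorted_wrt lex_less xs" "sorted_wrt lex_less ys" "set xs = set ys"
  shows "xs = ys"
proof -
  have "map dmid xs = map dmid ys"
    using assms by (intro sorted_distinct_set_unique)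
      (auto simp: sorted_lex_iff_sorted_dmid strict_sorted_iff)
  then show ?thesis using inj_dmid by (simp add: inj_map_eq_map)
qed

lemma sorted_lex_nth_less_iff:
  assumes "sorted_wrt lex_less xs" "i < length xs" "j < length xs"
  shows "lex_less (xs ! i) (xs ! j) \<longleftrightarrow> i < j"
  using assms sorted_wrt_nth_less[OF assms(1)] lex_less_asym
  by (metis lex_less_irrefl linorder_neqE_nat)

lemma ex_sorted_lex: "finite A \<Longrightarrow> \<exists>xs. sorted_wrt lex_less xs \<and> set xs = A"
proof (induct A rule: finite_induct)
  case (insert x A)
  then obtain xs where xs: "sorted_wrt lex_less xs" "set xs = A" by blast
  let ?ys = "filter (\<lambda>z. lex_less z x) xs @ [x] @ filter (\<lambda>z. lex_less x z) xs"
  have "sorted_wrt lex_less ?ys"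
    using xs(1) by (auto simp: sorted_wrt_append sorted_wrt_filter intro: lex_less_trans)
  moreover have "set ?ys = insert x A"
    using xs(2) insert(2) lex_less_linear by auto
  ultimately show ?case by blast
qed simp

lemma lex_enum_sorted_set:
  assumes "finite A"
  shows "sorted_wrt lex_less (lex_enum A) \<and> set (lex_enum A) = A"
proof -
  have "\<exists>!xs. sorted_wrt lex_less xs \<and> set xs = A"
    using ex_sorted_lex[OF assms] sorted_lex_unique by blast
  then show ?thesis unfolding lex_enum_def by (rule theI')
qed

lemma lex_enum_sorted_eq: "sorted_wrt lex_less xs \<Longrightarrow> lex_enum (set xs) = xs"
  using lex_enum_sorted_set[of "set xs"] sorted_lex_unique by auto

lemma distinct_lex_enum: "finite A \<Longrightarrow> distinct (lex_enum A)"
  using lex_enum_sorted_set sorted_lex_distinct by blast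

lemma length_lex_enum: "finite A \<Longrightarrow> length (lex_enum A) = card A"
  using distinct_lex_enum lex_enum_sorted_set distinct_card by metis

lemma card_lex_less_sorted_nth:
  assumes sorted: "sorted_wrt lex_less xs" and j: "j < length xs"
  shows "card {z \<in> set xs. lex_less z (xs ! j)} = j"
proof -
  have "{z \<in> set xs. lex_less z (xs ! j)} = set (take j xs)"
  proof (intro equalityI subsetI)
    fix z assume "z \<in> {z \<in> set xs. lex_less z (xs ! j)}"
    then obtain m where "m < length xs" "z = xs ! m" "lex_less (xs ! m) (xs ! j)"
      by (auto simp: in_set_conv_nth)
    then show "z \<in> set (take j xs)"
      using sorted_lex_nth_less_iff[OF sorted _ j] j by (auto simp: in_set_conv_nth)
  next
    fix z assume "z \<in> set (take j xs)"
    then obtain m where "m < j" "z = xs ! m" using j by (auto simp: in_set_conv_nth)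
    then show "z \<in> {z \<in> set xs. lex_less z (xs ! j)}"
      using sorted_lex_nth_less_iff[OF sorted _ j] j by auto
  qed
  moreover have "distinct (take j xs)" using sorted_lex_distinct[OF sorted] by simp
  ultimately show ?thesis using j by (simp add: distinct_card)
qed

section \<open>Binary value on Cantor space\<close>

definition cantor_val :: "(nat \<Rightarrow> bool) \<Rightarrow> real" where
  "cantor_val \<omega> = (\<Sum>n. (if \<omega> n then 1 else 0) * (1/2) ^ Suc n)"

lemma half_powers_sums: "(\<lambda>n. (1/2::real) ^ Suc n) sums 1"
  using sums_mult[OF geometric_sums[of "1/2::real"], of "1/2"] by simp

lemma summable_cantor_val: "summable (\<lambda>n. (if \<omega> n then 1 else 0) * (1/2::real) ^ Suc n)"
  by (rule summable_comparison_test[OF _ sums_summable[OF half_powers_sums]]) auto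

lemma cantor_val_nonneg: "0 \<le> cantor_val \<omega>"
  unfolding cantor_val_def by (rule suminf_nonneg[OF summable_cantor_val]) auto

lemma cantor_val_le_1: "cantor_val \<omega> \<le> 1"
proof -
  have "cantor_val \<omega> \<le> (\<Sum>n. (1/2::real) ^ Suc n)"
    unfolding cantor_val_def
    by (rule suminf_le[OF _ summable_cantor_val sums_summable[OF half_powers_sums]]) auto
  then show ?thesis using sums_unique[OF half_powers_sums] by simp
qed

lemma cantor_val_less_1:
  assumes "\<not> \<omega> n"
  shows "cantor_val \<omega> < 1"
proof -
  let ?a = "\<lambda>m. (if \<omega> m then 1 else 0) * (1/2::real) ^ Suc m"
  let ?b = "\<lambda>m. if m = n then (1/2::real) ^ Suc n else 0"
  have sum: "(\<lambda>m. ?a m + ?b m) sums (cantor_val \<omega> + (1/2) ^ Suc n)"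
    unfolding cantor_val_def
    by (intro sums_add summable_sums[OF summable_cantor_val])
      (use sums_single[of n "\<lambda>_. (1/2::real) ^ Suc n"] in simp)
  have "cantor_val \<omega> + (1/2) ^ Suc n \<le> 1"
    by (rule sums_le[OF _ sum half_powers_sums]) (use assms in auto)
  moreover have "(0::real) < (1/2) ^ Suc n" by simp
  ultimately show ?thesis by linarith
qed

lemma cantor_val_shift:
  "cantor_val \<omega> = (if \<omega> 0 then 1/2 else 0) + cantor_val (\<lambda>n. \<omega> (Suc n)) / 2"
proof -
  have "(\<Sum>n. (if \<omega> (Suc n) then 1 else 0) * (1/2::real) ^ Suc (Suc n)) =
      cantor_val \<omega> - (if \<omega> 0 then 1 else 0) * (1/2) ^ Suc 0"
    unfolding cantor_val_def by (rule suminf_split_head[OF summable_cantor_val])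
  moreover have "(\<Sum>n. (if \<omega> (Suc n) then 1 else 0) * (1/2::real) ^ Suc (Suc n)) =
      cantor_val (\<lambda>n. \<omega> (Suc n)) / 2"
    using suminf_divide[OF summable_cantor_val[of "\<lambda>n. \<omega> (Suc n)"], of 2]
    by (simp add: cantor_val_def field_simps)
  ultimately show ?thesis by auto
qed

lemma cat_Nil [simp]: "cat [] \<omega> = \<omega>"
  by (simp add: cat_def)

lemma cat_Cons_0 [simp]: "cat (b # l) \<omega> 0 = b"
  by (simp add: cat_def)

lemma cat_Cons_Suc [simp]: "cat (b # l) \<omega> (Suc n) = cat l \<omega> n"
  by (simp add: cat_def)

lemma cat_append: "cat (l @ s) \<omega> = cat l (cat s \<omega>)"
  by (auto simp: cat_def nth_append fun_eq_iff)

lemma cantor_val_cat: "cantor_val (cat l \<omega>) = dlo l + dwidth l * cantor_val \<omega>"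
proof (induct l)
  case (Cons b l)
  have "cantor_val (cat (b # l) \<omega>) = (if b then 1/2 else 0) + cantor_val (cat l \<omega>) / 2"
    by (subst cantor_val_shift) simp
  then show ?case using Cons by simp
qed simp

definition mid_seq :: "bool list \<Rightarrow> nat \<Rightarrow> bool" where
  "mid_seq x = cat (x @ [True]) (\<lambda>_. False)"

lemma cantor_val_mid_seq: "cantor_val (mid_seq x) = dmid x"
proof -
  have "cantor_val (\<lambda>_. False) = 0" by (simp add: cantor_val_def)
  then show ?thesis by (simp add: mid_seq_def cantor_val_cat dlo_append dwidth_append dmid_def)
qed

section \<open>Finite rooted binary trees\<close>

lemma is_tree_finite: "is_tree T \<Longrightarrow> finite T"
  by (simp add: is_tree_def)

lemma is_tree_Nil: "is_tree T \<Longrightarrow> [] \<in> T"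
  by (simp add: is_tree_def)

lemma is_tree_prefix: "is_tree T \<Longrightarrow> x @ s \<in> T \<Longrightarrow> x \<in> T"
  unfolding is_tree_def by blast

lemma is_tree_children: "is_tree T \<Longrightarrow> x \<in> T \<Longrightarrow> (x @ [False] \<in> T) = (x @ [True] \<in> T)"
  by (simp add: is_tree_def)

lemma mem_nodes_iff: "is_tree T \<Longrightarrow> x \<in> nodes T \<longleftrightarrow> x @ [False] \<in> T"
  using is_tree_children[of T x] is_tree_prefix[of T x "[False]"]
  by (auto simp: leaves_def nodes_def)

lemma finite_leaves: "is_tree T \<Longrightarrow> finite (leaves T)"
  using is_tree_finite by (auto simp: leaves_def)

lemma finite_nodes: "is_tree T \<Longrightarrow> finite (nodes T)"
  using is_tree_finite by (auto simp: nodes_def)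

lemma leaf_append_mem_tree: "is_tree T \<Longrightarrow> l \<in> leaves T \<Longrightarrow> l @ s \<in> T \<Longrightarrow> s = []"
proof (cases s)
  case (Cons b s')
  assume "is_tree T" "l \<in> leaves T" "l @ s \<in> T"
  then have "l @ [b] \<in> T" using Cons is_tree_prefix[of T "l @ [b]" s'] by simp
  then show ?thesis using \<open>l \<in> leaves T\<close> by (cases b) (auto simp: leaves_def)
qed

definition tree_join :: "bool list set \<Rightarrow> bool list set \<Rightarrow> bool list set" where
  "tree_join T0 T1 = insert [] (Cons False ` T0 \<union> Cons True ` T1)"

lemma leaves_tree_join:
  "is_tree T0 \<Longrightarrow> leaves (tree_join T0 T1) = Cons False ` leaves T0 \<union> Cons True ` leaves T1"
  using is_tree_Nil[of T0] by (auto simp: leaves_def tree_join_def)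

lemma nodes_tree_join:
  "is_tree T0 \<Longrightarrow>
    nodes (tree_join T0 T1) = insert [] (Cons False ` nodes T0 \<union> Cons True ` nodes T1)"
  using is_tree_Nil[of T0] by (auto simp: leaves_def nodes_def tree_join_def)

lemma leaves_root: "leaves {[]} = {[]}"
  by (auto simp: leaves_def)

lemma nodes_root: "nodes {[]} = {}"
  by (auto simp: leaves_def nodes_def)

lemma is_tree_split_root:
  assumes T: "is_tree T" and "[False] \<in> T"
  shows "T = tree_join {x. False # x \<in> T} {x. True # x \<in> T}"
    and "is_tree {x. b # x \<in> T}" and "card {x. b # x \<in> T} < card T"
proof -
  show "T = tree_join {x. False # x \<in> T} {x. True # x \<in> T}"
    unfolding tree_join_def using is_tree_Nil[OF T]
    by (auto simp: image_def) (metis list.exhaust)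
  have "[b] \<in> T" using assms is_tree_children[OF T is_tree_Nil[OF T]] by (cases b) auto
  moreover have fin: "finite T" using T is_tree_finite by blast
  ultimately show "is_tree {x. b # x \<in> T}"
    using T finite_vimageI[OF fin, of "Cons b"] by (auto simp: is_tree_def vimage_def)
  have "Cons b ` {x. b # x \<in> T} \<subseteq> T - {[]}" by auto
  then have "card (Cons b ` {x. b # x \<in> T}) \<le> card (T - {[]})"
    using fin by (intro card_mono) auto
  moreover have "card (T - {[]}) < card T" by (rule card_Diff1_less[OF fin is_tree_Nil[OF T]])
  ultimately show "card {x. b # x \<in> T} < card T" by (simp add: card_image)
qed

lemma is_tree_induct [consumes 1, case_names root join]:
  assumes "is_tree T" "P {[]}"
    "\<And>T0 T1. is_tree T0 \<Longrightarrow> is_tree T1 \<Longrightarrow> P T0 \<Longrightarrow> P T1 \<Longrightarrow> P (tree_join T0 T1)"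
  shows "P T"
  using assms(1)
proof (induct "card T" arbitrary: T rule: less_induct)
  case (less T)
  show ?case
  proof (cases "[False] \<in> T")
    case False
    have "T = {[]}"
    proof (intro equalityI subsetI)
      fix x assume "x \<in> T"
      show "x \<in> {[]}"
      proof (cases x)
        case (Cons b x')
        then have "[b] \<in> T" using \<open>x \<in> T\<close> is_tree_prefix[OF less.prems, of "[b]" x'] by simp
        then show ?thesis
          using False is_tree_children[OF less.prems is_tree_Nil[OF less.prems]] by (cases b) auto
      qed simp
    qed (use is_tree_Nil[OF less.prems] in simp)
    then show ?thesis using assms(2) by simp
  next
    case True
    note split = is_tree_split_root[OF less.prems True]
    show ?thesis
      using assms(3)[OF split(2) split(2) less.hyps[OF split(3) split(2)] less.hyps[OF split(3) split(2)]]
      by (subst split(1))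
  qed
qed

abbreviation leaf_list :: "bool list set \<Rightarrow> bool list list" where
  "leaf_list T \<equiv> lex_enum (leaves T)"

abbreviation node_list :: "bool list set \<Rightarrow> bool list list" where
  "node_list T \<equiv> lex_enum (nodes T)"

lemma leaf_list_sorted_set:
  "is_tree T \<Longrightarrow> sorted_wrt lex_less (leaf_list T) \<and> set (leaf_list T) = leaves T"
  by (rule lex_enum_sorted_set[OF finite_leaves])

lemma node_list_sorted_set:
  "is_tree T \<Longrightarrow> sorted_wrt lex_less (node_list T) \<and> set (node_list T) = nodes T"
  by (rule lex_enum_sorted_set[OF finite_nodes])

lemma sorted_lex_map_Cons: "sorted_wrt lex_less (map (Cons b) xs) \<longleftrightarrow> sorted_wrt lex_less xs"
  by (induct xs) auto

lemma leaf_list_join: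
  assumes "is_tree T0" "is_tree T1"
  shows "leaf_list (tree_join T0 T1) = map (Cons False) (leaf_list T0) @ map (Cons True) (leaf_list T1)"
proof -
  have "sorted_wrt lex_less (map (Cons False) (leaf_list T0) @ map (Cons True) (leaf_list T1))"
    using leaf_list_sorted_set[OF assms(1)] leaf_list_sorted_set[OF assms(2)]
    by (auto simp: sorted_wrt_append sorted_lex_map_Cons)
  moreover have "set (map (Cons False) (leaf_list T0) @ map (Cons True) (leaf_list T1)) =
      leaves (tree_join T0 T1)"
    using leaf_list_sorted_set[OF assms(1)] leaf_list_sorted_set[OF assms(2)] leaves_tree_join[OF assms(1)] by auto
  ultimately show ?thesis using lex_enum_sorted_eq by metis
qed

lemma node_list_join:
  assumes "is_tree T0" "is_tree T1"
  shows "node_list (tree_join T0 T1) =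
    map (Cons False) (node_list T0) @ [[]] @ map (Cons True) (node_list T1)"
proof -
  have "sorted_wrt lex_less (map (Cons False) (node_list T0) @ [[]] @ map (Cons True) (node_list T1))"
    using node_list_sorted_set[OF assms(1)] node_list_sorted_set[OF assms(2)]
    by (auto simp: sorted_wrt_append sorted_lex_map_Cons)
  moreover have "set (map (Cons False) (node_list T0) @ [[]] @ map (Cons True) (node_list T1)) =
      nodes (tree_join T0 T1)"
    using node_list_sorted_set[OF assms(1)] node_list_sorted_set[OF assms(2)] nodes_tree_join[OF assms(1)] by auto
  ultimately show ?thesis using lex_enum_sorted_eq by metis
qed

lemma leaf_list_root: "leaf_list {[]} = [[]]"
  using lex_enum_sorted_eq[of "[[]]"] by (simp add: leaves_root)

lemma node_list_root: "node_list {[]} = []"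
  using lex_enum_sorted_eq[of "[]"] by (simp add: nodes_root)

fun tiles :: "real \<Rightarrow> real \<Rightarrow> bool list list \<Rightarrow> bool" where
  "tiles a b [] = False"
| "tiles a b (l # ls) =
    (dlo l = a \<and> (if ls = [] then dlo l + dwidth l = b else tiles (dlo l + dwidth l) b ls))"

lemma tiles_hd: "tiles a b ls \<Longrightarrow> ls \<noteq> [] \<and> dlo (ls ! 0) = a"
  by (cases ls) auto

lemma tiles_append: "tiles a b ls \<Longrightarrow> tiles b c ms \<Longrightarrow> tiles a c (ls @ ms)"
proof (induct ls arbitrary: a)
  case (Cons l ls)
  then show ?case using tiles_hd[of b c ms] by (cases ls) auto
qed simp

lemma tiles_map_Cons:
  "tiles a b ls \<Longrightarrow>
    tiles ((if c then 1/2 else 0) + a/2) ((if c then 1/2 else 0) + b/2) (map (Cons c) ls)"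
proof (induct ls arbitrary: a)
  case (Cons l ls)
  then show ?case by (cases ls) (auto simp: field_simps)
qed simp

lemma tiles_nth_Suc:
  "tiles a b ls \<Longrightarrow> Suc i < length ls \<Longrightarrow> dlo (ls ! Suc i) = dlo (ls ! i) + dwidth (ls ! i)"
proof (induct ls arbitrary: a i)
  case (Cons l ls)
  then show ?case using tiles_hd[of "dlo l + dwidth l" b ls] by (cases i) (auto split: if_splits)
qed simp

lemma tiles_nth_le:
  assumes "tiles a b ls" "i < j" "j < length ls"
  shows "dlo (ls ! i) + dwidth (ls ! i) \<le> dlo (ls ! j)"
  using assms(2,3)
proof (induct j)
  case (Suc j)
  then show ?case
    using tiles_nth_Suc[OF assms(1), of j] dwidth_pos[of "ls ! j"] by (cases "i = j") auto
qed simp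

lemma tiles_nth_less:
  assumes "tiles a b ls" "Suc i < j" "j < length ls"
  shows "dlo (ls ! i) + dwidth (ls ! i) < dlo (ls ! j)"
proof -
  obtain j' where j': "j = Suc j'" "i < j'" using assms(2) by (cases j) auto
  then show ?thesis
    using tiles_nth_le[OF assms(1) j'(2)] tiles_nth_Suc[OF assms(1), of j'] assms(3)
      dwidth_pos[of "ls ! j'"]
    by simp
qed

lemma tiles_dlo_less:
  "tiles a b ls \<Longrightarrow> i < j \<Longrightarrow> j < length ls \<Longrightarrow> dlo (ls ! i) < dlo (ls ! j)"
  using tiles_nth_le[of a b ls i j] dwidth_pos[of "ls ! i"] by simp

lemma tiles_point_eq_dlo:
  assumes ls: "tiles a b ls" and m: "m < length ls" and k: "k < length ls"
    and t: "0 \<le> t" "t < 1" and eq: "dlo (ls ! m) + dwidth (ls ! m) * t = dlo (ls ! k)"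
  shows "m = k \<and> t = 0"
proof -
  have w: "0 < dwidth (ls ! m)" by (rule dwidth_pos)
  then have "0 \<le> dwidth (ls ! m) * t" "dwidth (ls ! m) * t < dwidth (ls ! m)"
    using t by auto
  moreover have "\<not> m < k"
    using tiles_nth_le[OF ls _ k, of m] eq calculation by linarith
  moreover have "\<not> k < m"
    using tiles_dlo_less[OF ls _ m, of k] eq calculation by linarith
  ultimately have "m = k" by simp
  then show ?thesis using eq w by simp
qed

lemma tiles_leaf_list: "is_tree T \<Longrightarrow> tiles 0 1 (leaf_list T)"
proof (induct T rule: is_tree_induct)
  case root
  then show ?case by (simp add: leaf_list_root)
next
  case (join T0 T1)
  have "tiles 0 (1/2) (map (Cons False) (leaf_list T0))"
    using tiles_map_Cons[OF join(3), of False] by simp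
  moreover have "tiles (1/2) 1 (map (Cons True) (leaf_list T1))"
    using tiles_map_Cons[OF join(4), of True] by simp
  ultimately show ?case by (simp add: leaf_list_join[OF join(1,2)] tiles_append)
qed

lemma leaf_list_nonempty: "is_tree T \<Longrightarrow> leaf_list T \<noteq> []"
  using tiles_hd[OF tiles_leaf_list] by blast

lemma map_dmid_node_list: "is_tree T \<Longrightarrow> map dmid (node_list T) = tl (map dlo (leaf_list T))"
proof (induct T rule: is_tree_induct)
  case root
  then show ?case by (simp add: leaf_list_root node_list_root)
next
  case (join T0 T1)
  obtain l0 ls0 where l0: "leaf_list T0 = l0 # ls0"
    using leaf_list_nonempty[OF join(1)] by (cases "leaf_list T0") auto
  obtain l1 ls1 where l1: "leaf_list T1 = l1 # ls1" "dlo l1 = 0"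
    using tiles_hd[OF tiles_leaf_list[OF join(2)]] by (cases "leaf_list T1") auto
  have "map dmid (node_list (tree_join T0 T1)) = map (\<lambda>r. r/2) (map dmid (node_list T0)) @
      [1/2] @ map (\<lambda>r. 1/2 + r/2) (map dmid (node_list T1))"
    by (simp add: node_list_join[OF join(1,2)])
  also have "\<dots> = tl (map dlo (leaf_list (tree_join T0 T1)))"
    using join(3,4) l0 l1 by (simp add: leaf_list_join[OF join(1,2)])
  finally show ?case .
qed

lemma length_node_list: "is_tree T \<Longrightarrow> length (node_list T) = length (leaf_list T) - 1"
  using arg_cong[OF map_dmid_node_list, of T length] by simp

lemma dmid_node_list_nth:
  assumes "is_tree T" "j < length (node_list T)"
  shows "dmid (node_list T ! j) = dlo (leaf_list T ! Suc j)"
  using arg_cong[OF map_dmid_node_list[OF assms(1)], of "\<lambda>xs. xs ! j"] assms length_node_list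
  by (simp add: nth_tl)

lemma node_lex_less_leaf_iff:
  assumes T: "is_tree T" and j: "j < length (node_list T)" and k: "k < length (leaf_list T)"
  shows "lex_less (node_list T ! j) (leaf_list T ! k) \<longleftrightarrow> j < k"
proof -
  note tiling = tiles_leaf_list[OF T]
  have Suc_j: "Suc j < length (leaf_list T)" using j length_node_list[OF T] by simp
  show ?thesis
  proof (cases "j < k")
    case True
    then have "dlo (leaf_list T ! Suc j) \<le> dlo (leaf_list T ! k)"
      using tiles_dlo_less[OF tiling _ k, of "Suc j"] by (cases "Suc j = k") auto
    then show ?thesis
      using True dmid_bounds[of "leaf_list T ! k"] dmid_node_list_nth[OF T j]
      by (simp add: lex_less_iff_dmid_less)
  next
    case False
    then have "dlo (leaf_list T ! k) + dwidth (leaf_list T ! k) \<le> dlo (leaf_list T ! Suc j)"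
      using tiles_nth_le[OF tiling _ Suc_j] by simp
    then show ?thesis
      using False dmid_bounds[of "leaf_list T ! k"] dmid_node_list_nth[OF T j]
      by (simp add: lex_less_iff_dmid_less)
  qed
qed

lemma leaf_lex_less_node_iff:
  assumes T: "is_tree T" and j: "j < length (node_list T)" and k: "k < length (leaf_list T)"
  shows "lex_less (leaf_list T ! k) (node_list T ! j) \<longleftrightarrow> k \<le> j"
proof -
  have "leaf_list T ! k \<noteq> node_list T ! j"
    using nth_mem[OF j] nth_mem[OF k] node_list_sorted_set[OF T] leaf_list_sorted_set[OF T]
    by (auto simp: nodes_def)
  then show ?thesis
    using node_lex_less_leaf_iff[OF assms] lex_less_linear lex_less_asym by (metis not_less)
qed

section \<open>Tree pairs and the action on words\<close>

definition seq_prefix :: "bool list \<Rightarrow> (nat \<Rightarrow> bool) \<Rightarrow> bool" where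
  "seq_prefix l \<omega> \<longleftrightarrow> (\<forall>j<length l. \<omega> j = l ! j)"

lemma seq_prefix_cat [simp]: "seq_prefix l (cat l \<alpha>)"
  by (simp add: seq_prefix_def cat_def)

lemma cat_drop_length [simp]: "(\<lambda>n. cat l \<alpha> (n + length l)) = \<alpha>"
  by (simp add: cat_def)

lemma cat_seq_prefix: "seq_prefix l \<omega> \<Longrightarrow> cat l (\<lambda>n. \<omega> (n + length l)) = \<omega>"
  by (auto simp: seq_prefix_def cat_def fun_eq_iff)

lemma ex_leaf_seq_prefix: "is_tree T \<Longrightarrow> \<exists>l\<in>leaves T. seq_prefix l \<omega>"
proof (induct T arbitrary: \<omega> rule: is_tree_induct)
  case root
  then show ?case by (auto simp: leaves_root seq_prefix_def)
next
  case (join T0 T1)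
  obtain l where "l \<in> leaves (if \<omega> 0 then T1 else T0)" "seq_prefix l (\<lambda>n. \<omega> (Suc n))"
    using join(3,4) by (cases "\<omega> 0") (simp_all, blast+)
  then show ?case using leaves_tree_join[OF join(1)]
    by (intro bexI[of _ "\<omega> 0 # l"]) (auto simp: seq_prefix_def less_Suc_eq_0_disj split: if_splits)
qed

lemma ex_leaf_prefix: "is_tree T \<Longrightarrow> x \<notin> nodes T \<Longrightarrow> \<exists>l\<in>leaves T. \<exists>s. x = l @ s"
proof (induct T arbitrary: x rule: is_tree_induct)
  case root
  then show ?case by (auto simp: leaves_root)
next
  case (join T0 T1)
  obtain b x' where x: "x = b # x'" using join(5) nodes_tree_join[OF join(1)] by (cases x) auto
  then have "x' \<notin> nodes (if b then T1 else T0)" using join(5) nodes_tree_join[OF join(1)] by auto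
  then obtain l s where "l \<in> leaves (if b then T1 else T0)" "x' = l @ s"
    using join(3,4) by (cases b) (simp_all, blast+)
  then show ?case using x leaves_tree_join[OF join(1)]
    by (intro bexI[of _ "b # l"]) (auto split: if_splits)
qed

lemma leaf_append_eq:
  assumes T: "is_tree T" and l: "l \<in> leaves T" and l': "l' \<in> leaves T" and eq: "l @ s = l' @ s'"
  shows "l = l'"
proof -
  obtain u where "l = l' @ u \<or> l @ u = l'" using eq by (auto simp: append_eq_append_conv2)
  then show ?thesis
    using leaf_append_mem_tree[OF T l, of u] leaf_append_mem_tree[OF T l', of u] l l'
    by (auto simp: leaves_def)
qed

lemma seq_prefix_append_drop:
  assumes "seq_prefix l \<omega>" "seq_prefix l' \<omega>" "length l \<le> length l'"
  shows "l' = l @ drop (length l) l'"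
proof -
  have "take (length l) l' = l"
    using assms by (intro nth_equalityI) (auto simp: seq_prefix_def)
  then show ?thesis by (metis append_take_drop_id)
qed

lemma seq_prefix_leaf_eq:
  assumes T: "is_tree T" and l: "l \<in> leaves T" and l': "l' \<in> leaves T"
    and pre: "seq_prefix l \<omega>" "seq_prefix l' \<omega>"
  shows "l = l'"
proof (cases "length l \<le> length l'")
  case True
  then show ?thesis
    using leaf_append_eq[OF T l l', of "drop (length l) l'" "[]"] seq_prefix_append_drop[OF pre] by simp
next
  case False
  then show ?thesis
    using leaf_append_eq[OF T l l', of "[]" "drop (length l') l"] seq_prefix_append_drop[OF pre(2,1)]
    by simp
qed

lemma ex_leaf_list_cat: "is_tree T \<Longrightarrow> \<exists>i<length (leaf_list T). \<exists>\<alpha>. \<omega> = cat (leaf_list T ! i) \<alpha>"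
  using ex_leaf_seq_prefix[of T \<omega>] leaf_list_sorted_set[of T] cat_seq_prefix by (metis in_set_conv_nth)

lemma nth_the_index: "distinct xs \<Longrightarrow> j < length xs \<Longrightarrow> (THE i. i < length xs \<and> xs ! i = xs ! j) = j"
  by (rule the_equality) (auto simp: nth_eq_iff_index_eq)

lemma iota_pair_node:
  assumes "is_tree L" "j < length (node_list L)"
  shows "iota_pair L R (node_list L ! j) = node_list R ! j"
proof -
  have "node_list L ! j \<in> nodes L" using assms node_list_sorted_set nth_mem by blast
  then show ?thesis
    using nth_the_index[OF distinct_lex_enum[OF finite_nodes[OF assms(1)]] assms(2)]
    by (simp add: iota_pair_def)
qed

lemma iota_pair_leaf_append:
  assumes L: "is_tree L" and i: "i < length (leaf_list L)"
  shows "iota_pair L R (leaf_list L ! i @ s) = leaf_list R ! i @ s"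
proof -
  have leaf: "leaf_list L ! k \<in> leaves L" if "k < length (leaf_list L)" for k
    using that leaf_list_sorted_set[OF L] nth_mem by blast
  have "leaf_list L ! i @ s \<notin> nodes L"
    using leaf_append_mem_tree[OF L leaf[OF i], of s] leaf[OF i] by (auto simp: nodes_def)
  moreover have "(THE k. k < length (leaf_list L) \<and> (\<exists>s'. leaf_list L ! i @ s = leaf_list L ! k @ s')) = i"
  proof (rule the_equality)
    fix k assume "k < length (leaf_list L) \<and> (\<exists>s'. leaf_list L ! i @ s = leaf_list L ! k @ s')"
    then show "k = i"
      using leaf_append_eq[OF L leaf[OF i] leaf] i
        nth_eq_iff_index_eq[OF distinct_lex_enum[OF finite_leaves[OF L]]]
      by metis
  qed (use i in blast)
  ultimately show ?thesis by (simp add: iota_pair_def)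
qed

lemma represents_nth:
  assumes "represents L R f"
  shows "is_tree L" "is_tree R" "length (leaf_list L) = length (leaf_list R)"
    and "i < length (leaf_list L) \<Longrightarrow> f (cat (leaf_list L ! i) \<alpha>) = cat (leaf_list R ! i) \<alpha>"
  using assms length_lex_enum[OF finite_leaves, of L] length_lex_enum[OF finite_leaves, of R]
  by (auto simp: represents_def)

lemma mid_seq_beyond: "length x < n \<Longrightarrow> \<not> mid_seq x n"
  by (simp add: mid_seq_def cat_def)

lemma dmid_iota_pair_node:
  assumes rep: "represents L R f" and x: "x \<in> nodes L"
  shows "dmid (iota_pair L R x) = cantor_val (f (mid_seq x))"
proof -
  note L = represents_nth(1)[OF rep] and R = represents_nth(2)[OF rep]
  obtain j where j: "j < length (node_list L)" "x = node_list L ! j"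
    using x node_list_sorted_set[OF L] by (metis in_set_conv_nth)
  obtain i \<alpha> where i: "i < length (leaf_list L)" and \<alpha>: "mid_seq x = cat (leaf_list L ! i) \<alpha>"
    using ex_leaf_list_cat[OF L] by blast
  have "\<not> \<alpha> (Suc (length x))"
    using mid_seq_beyond[of x "Suc (length x) + length (leaf_list L ! i)"] \<alpha>
    by (simp add: cat_def)
  then have "cantor_val \<alpha> < 1" by (rule cantor_val_less_1)
  moreover have "dlo (leaf_list L ! i) + dwidth (leaf_list L ! i) * cantor_val \<alpha> =
      dlo (leaf_list L ! Suc j)"
    using cantor_val_mid_seq[of x] dmid_node_list_nth[OF L j(1)] \<alpha> j(2) by (simp add: cantor_val_cat)
  ultimately have "i = Suc j" "cantor_val \<alpha> = 0"
    using tiles_point_eq_dlo[OF tiles_leaf_list[OF L] i, of "Suc j" "cantor_val \<alpha>"] cantor_val_nonneg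
      length_node_list[OF L] j(1)
    by auto
  moreover have "j < length (node_list R)"
    using j(1) length_node_list[OF L] length_node_list[OF R] represents_nth(3)[OF rep] by simp
  ultimately show ?thesis
    using represents_nth(4)[OF rep i] iota_pair_node[OF L j(1)] dmid_node_list_nth[OF R] \<alpha> j(2)
    by (simp add: cantor_val_cat)
qed

lemma dmid_iota_pair_non_node:
  assumes rep: "represents L R f" and x: "x \<notin> nodes L"
  shows "dmid (iota_pair L R x) = cantor_val (f (mid_seq x))"
proof -
  note L = represents_nth(1)[OF rep]
  obtain i s where i: "i < length (leaf_list L)" and x: "x = leaf_list L ! i @ s"
    using ex_leaf_prefix[OF L x] leaf_list_sorted_set[OF L] by (metis in_set_conv_nth)
  have "mid_seq x = cat (leaf_list L ! i) (mid_seq s)"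
    by (simp add: mid_seq_def x cat_append)
  then show ?thesis
    using represents_nth(4)[OF rep i] iota_pair_leaf_append[OF L i]
    by (simp add: x cantor_val_cat cantor_val_mid_seq dmid_append)
qed

lemma dmid_iota_pair:
  "represents L R f \<Longrightarrow> dmid (iota_pair L R x) = cantor_val (f (mid_seq x))"
  using dmid_iota_pair_node dmid_iota_pair_non_node by blast

lemma iota_eq_iota_pair:
  assumes rep: "represents L R f"
  shows "iota f = iota_pair L R"
proof -
  define p where "p = (SOME p. represents (fst p) (snd p) f)"
  have "represents (fst p) (snd p) f"
    unfolding p_def by (rule someI_ex) (use rep in auto)
  then have "dmid (iota f x) = dmid (iota_pair L R x)" for x
    unfolding iota_def p_def[symmetric] by (simp add: dmid_iota_pair[OF rep] dmid_iota_pair)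
  then show ?thesis using inj_dmid by (auto dest: injD)
qed

lemma cantor_val_represents:
  assumes "represents L R f" "i < length (leaf_list L)"
  shows "cantor_val (f (cat (leaf_list L ! i) \<alpha>)) =
    dlo (leaf_list R ! i) + dwidth (leaf_list R ! i) * cantor_val \<alpha>"
  using represents_nth(4)[OF assms] by (simp add: cantor_val_cat)

text \<open>The map f is increasing for the (non-injective) binary value: on the cylinder of the i-th
  leaf of L it is affine onto the interval of the i-th leaf of R. At a common endpoint of two
  adjacent cylinders, strictness survives because the endpoints of L and R correspond.\<close>

lemma cantor_val_represents_less:
  assumes rep: "represents L R f" and less: "cantor_val \<omega> < cantor_val \<omega>'"
  shows "cantor_val (f \<omega>) < cantor_val (f \<omega>')"
proof -
  note L = represents_nth(1)[OF rep] and R = represents_nth(2)[OF rep]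
  note tL = tiles_leaf_list[OF L] and tR = tiles_leaf_list[OF R]
  obtain i \<alpha> where i: "i < length (leaf_list L)" and \<omega>: "\<omega> = cat (leaf_list L ! i) \<alpha>"
    using ex_leaf_list_cat[OF L] by blast
  obtain j \<beta> where j: "j < length (leaf_list L)" and \<omega>': "\<omega>' = cat (leaf_list L ! j) \<beta>"
    using ex_leaf_list_cat[OF L] by blast
  have iR: "i < length (leaf_list R)" and jR: "j < length (leaf_list R)"
    using i j represents_nth(3)[OF rep] by auto
  define a b where "a = cantor_val \<alpha>" and "b = cantor_val \<beta>"
  have ab: "0 \<le> a" "a \<le> 1" "0 \<le> b" "b \<le> 1"
    using cantor_val_nonneg cantor_val_le_1 by (auto simp: a_def b_def)
  define lL wL lR wR where "lL k = dlo (leaf_list L ! k)" and "wL k = dwidth (leaf_list L ! k)"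
    and "lR k = dlo (leaf_list R ! k)" and "wR k = dwidth (leaf_list R ! k)" for k
  have w: "0 < wL i" "0 < wL j" "0 < wR i" "0 < wR j"
    using dwidth_pos by (auto simp: wL_def wR_def)
  have val: "cantor_val \<omega> = lL i + wL i * a" "cantor_val \<omega>' = lL j + wL j * b"
    "cantor_val (f \<omega>) = lR i + wR i * a" "cantor_val (f \<omega>') = lR j + wR j * b"
    using cantor_val_represents[OF rep i] cantor_val_represents[OF rep j]
    by (simp_all add: \<omega> \<omega>' cantor_val_cat lL_def wL_def lR_def wR_def a_def b_def)
  have prod: "0 \<le> wL i * a" "wL j * b \<le> wL j" "wR i * a \<le> wR i" "0 \<le> wR j * b"
    using ab w by (simp_all add: mult_le_cancel_left1)
  have "\<not> j < i"
    using tiles_nth_le[OF tL _ i, of j] val(1,2) prod less by (auto simp: lL_def wL_def)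
  then consider "i = j" | "i < j" by linarith
  then show ?thesis
  proof cases
    case 1
    then show ?thesis using val less w(1,3) by simp
  next
    case 2
    have le: "lR i + wR i \<le> lR j"
      using tiles_nth_le[OF tR 2 jR] by (simp add: lR_def wR_def)
    show ?thesis
    proof (rule ccontr)
      assume "\<not> ?thesis"
      then have "wR i * a = wR i" "wR j * b = 0" "lR i + wR i = lR j"
        using val(3,4) prod(3,4) le by linarith+
      moreover have "\<not> Suc i < j"
        using tiles_nth_less[OF tR _ jR, of i] calculation(3) by (auto simp: lR_def wR_def)
      ultimately have "a = 1" "b = 0" "j = Suc i"
        using w 2 by auto
      then show False
        using val(1,2) less tiles_nth_Suc[OF tL, of i] j by (simp add: lL_def wL_def)
    qed
  qed
qed

lemma iota_lex_mono:
  assumes f: "f \<in> thompsonF" and less: "lex_less x y"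
  shows "lex_less (iota f x) (iota f y)"
proof -
  obtain L R where rep: "represents L R f" using f by (auto simp: thompsonF_def)
  have "cantor_val (mid_seq x) < cantor_val (mid_seq y)"
    using less by (simp add: cantor_val_mid_seq lex_less_iff_dmid_less)
  then show ?thesis
    using cantor_val_represents_less[OF rep]
    by (simp add: lex_less_iff_dmid_less iota_eq_iota_pair[OF rep] dmid_iota_pair[OF rep])
qed

definition leaf_index :: "bool list set \<Rightarrow> (nat \<Rightarrow> bool) \<Rightarrow> nat" where
  "leaf_index T \<omega> = (THE i. i < length (leaf_list T) \<and> seq_prefix (leaf_list T ! i) \<omega>)"

lemma leaf_index_eq:
  assumes T: "is_tree T" and i: "i < length (leaf_list T)" and pre: "seq_prefix (leaf_list T ! i) \<omega>"
  shows "leaf_index T \<omega> = i"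
  unfolding leaf_index_def
proof (rule the_equality)
  fix k assume k: "k < length (leaf_list T) \<and> seq_prefix (leaf_list T ! k) \<omega>"
  have "leaf_list T ! k = leaf_list T ! i"
    using seq_prefix_leaf_eq[OF T _ _ _ pre] k i leaf_list_sorted_set[OF T] nth_mem by blast
  then show "k = i"
    using nth_eq_iff_index_eq[OF distinct_lex_enum[OF finite_leaves[OF T]]] i k by blast
qed (use i pre in blast)

lemma leaf_index:
  "is_tree T \<Longrightarrow> leaf_index T \<omega> < length (leaf_list T) \<and> seq_prefix (leaf_list T ! leaf_index T \<omega>) \<omega>"
  using ex_leaf_seq_prefix[of T \<omega>] leaf_list_sorted_set[of T] leaf_index_eq by (metis in_set_conv_nth)

definition tree_pair_map ::
  "bool list set \<Rightarrow> bool list set \<Rightarrow> (nat \<Rightarrow> bool) \<Rightarrow> nat \<Rightarrow> bool" where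
  "tree_pair_map L R \<omega> =
    cat (leaf_list R ! leaf_index L \<omega>) (\<lambda>n. \<omega> (n + length (leaf_list L ! leaf_index L \<omega>)))"

lemma tree_pair_map_cat:
  "is_tree L \<Longrightarrow> i < length (leaf_list L) \<Longrightarrow>
    tree_pair_map L R (cat (leaf_list L ! i) \<alpha>) = cat (leaf_list R ! i) \<alpha>"
  using leaf_index_eq[of L i "cat (leaf_list L ! i) \<alpha>"] unfolding tree_pair_map_def by simp

lemma tree_pair_map_inverse:
  assumes L: "is_tree L" and R: "is_tree R" and len: "length (leaf_list L) = length (leaf_list R)"
  shows "tree_pair_map R L (tree_pair_map L R \<omega>) = \<omega>"
proof -
  obtain i \<alpha> where i: "i < length (leaf_list L)" and \<omega>: "\<omega> = cat (leaf_list L ! i) \<alpha>"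
    using ex_leaf_list_cat[OF L] by blast
  show ?thesis using tree_pair_map_cat[OF L i] tree_pair_map_cat[OF R, of i L \<alpha>] i len \<omega> by simp
qed

lemma continuous_on_finite_dependence:
  fixes h :: "(nat \<Rightarrow> bool) \<Rightarrow> bool"
  assumes dep: "\<And>\<omega> \<omega>'. (\<forall>j<M. \<omega> j = \<omega>' j) \<Longrightarrow> h \<omega> = h \<omega>'"
  shows "continuous_on UNIV h"
  unfolding continuous_on_open_invariant
proof (intro allI impI)
  fix B :: "bool set"
  have "open (h -` B)"
    unfolding open_subopen[of "h -` B"]
  proof
    fix \<omega> assume \<omega>: "\<omega> \<in> h -` B"
    define C where "C = {\<omega>'. \<forall>j\<in>{..<M}. \<omega>' (id j) \<in> {\<omega> j}}"
    have "open C" unfolding C_def by (rule product_topology_basis') (auto intro: open_discrete)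
    moreover have "\<omega> \<in> C" by (simp add: C_def)
    moreover have "C \<subseteq> h -` B" using \<omega> dep by (auto simp: C_def)
    ultimately show "\<exists>T. open T \<and> \<omega> \<in> T \<and> T \<subseteq> h -` B" by blast
  qed
  then show "\<exists>A. open A \<and> A \<inter> UNIV = h -` B \<inter> UNIV" by auto
qed

lemma continuous_on_tree_pair_map:
  assumes L: "is_tree L"
  shows "continuous_on UNIV (tree_pair_map L R)"
proof (rule continuous_on_coordinatewise_then_product)
  fix n
  define K where "K = Max (length ` leaves L)"
  have K: "length (leaf_list L ! i) \<le> K" if "i < length (leaf_list L)" for i
    unfolding K_def using that leaf_list_sorted_set[OF L] finite_leaves[OF L] by (intro Max_ge) auto
  show "continuous_on UNIV (\<lambda>\<omega>. tree_pair_map L R \<omega> n)"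
  proof (rule continuous_on_finite_dependence[of "n + K + 1"])
    fix \<omega> \<omega>' :: "nat \<Rightarrow> bool" assume agree: "\<forall>j<n + K + 1. \<omega> j = \<omega>' j"
    define i where "i = leaf_index L \<omega>"
    have i: "i < length (leaf_list L)" "seq_prefix (leaf_list L ! i) \<omega>"
      using leaf_index[OF L] i_def by auto
    have "seq_prefix (leaf_list L ! i) \<omega>'" using i(2) agree K[OF i(1)] by (auto simp: seq_prefix_def)
    then have "leaf_index L \<omega>' = i" using leaf_index_eq[OF L i(1)] by simp
    moreover have "\<omega> (n + length (leaf_list L ! i) - length (leaf_list R ! i)) =
        \<omega>' (n + length (leaf_list L ! i) - length (leaf_list R ! i))"
      using agree K[OF i(1)] by auto
    ultimately show "tree_pair_map L R \<omega> n = tree_pair_map L R \<omega>' n"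
      unfolding tree_pair_map_def i_def[symmetric] by (simp add: cat_def)
  qed
qed

lemma tree_pair_map_thompsonF:
  assumes L: "is_tree L" and R: "is_tree R" and len: "length (leaf_list L) = length (leaf_list R)"
  shows "represents L R (tree_pair_map L R)" and "tree_pair_map L R \<in> thompsonF"
proof -
  show rep: "represents L R (tree_pair_map L R)"
    using L R len tree_pair_map_cat[OF L]
      length_lex_enum[OF finite_leaves[OF L]] length_lex_enum[OF finite_leaves[OF R]]
    by (auto simp: represents_def)
  have "homeomorphism UNIV UNIV (tree_pair_map L R) (tree_pair_map R L)"
    unfolding homeomorphism_def
    using tree_pair_map_inverse[OF L R len] tree_pair_map_inverse[OF R L len[symmetric]]
      continuous_on_tree_pair_map[OF L] continuous_on_tree_pair_map[OF R]
    by (auto simp: image_def) metis+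
  with rep show "tree_pair_map L R \<in> thompsonF" unfolding thompsonF_def by blast
qed

section \<open>Transitivity\<close>

lemma ex_tree_nodes_superset:
  assumes fin: "finite S"
  shows "\<exists>T. is_tree T \<and> S \<subseteq> nodes T"
proof -
  define T where "T = insert [] {x. \<exists>s\<in>S. \<exists>t. butlast x @ t = s}"
  have child: "x @ [b] \<in> T \<longleftrightarrow> (\<exists>s\<in>S. \<exists>t. x @ t = s)" for x b by (simp add: T_def)
  define M where "M = Max (length ` S)"
  have "length x \<le> Suc M" if x: "x \<in> T" for x
  proof (cases "x = []")
    case False
    then obtain s t where "s \<in> S" "butlast x @ t = s" using x by (auto simp: T_def)
    moreover from this have "length s \<le> M" unfolding M_def using fin by (intro Max_ge) auto
    ultimately show ?thesis by auto
  qed simp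
  then have "finite T"
    by (intro finite_subset[OF _ finite_lists_length_le[of UNIV "Suc M"]]) auto
  moreover have "x \<in> T" if xu: "x @ u \<in> T" for x u
  proof (cases "x = []")
    case False
    then obtain s t where st: "s \<in> S" "butlast (x @ u) @ t = s" using xu by (auto simp: T_def)
    have "\<exists>v. butlast x @ v = butlast (x @ u)"
      using False by (cases "u = []") (auto simp: butlast_append intro: exI[of _ "last x # butlast u"])
    then show ?thesis using st by (auto simp: T_def) (metis append.assoc)
  qed (simp add: T_def)
  ultimately have tree: "is_tree T"
    unfolding is_tree_def by (auto simp: child) (simp add: T_def)
  have "S \<subseteq> nodes T"
    using child[of _ False] mem_nodes_iff[OF tree] by blast
  with tree show ?thesis by blast
qed

lemma tree_expand_leaf:
  assumes T: "is_tree T" and l: "l \<in> leaves T"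
  shows "is_tree (T \<union> {l @ [False], l @ [True]})"
    and "nodes (T \<union> {l @ [False], l @ [True]}) = insert l (nodes T)"
proof -
  let ?T = "T \<union> {l @ [False], l @ [True]}"
  have lT: "l \<in> T" and lc: "l @ [False] \<notin> T" "l @ [True] \<notin> T" using l by (auto simp: leaves_def)
  have below: "l @ [b] @ u \<notin> T" for b u
    using leaf_append_mem_tree[OF T l, of "[b] @ u"] by auto
  have prefix: "x \<in> ?T" if xu: "x @ u \<in> ?T" for x u
  proof (cases "x @ u \<in> T")
    case False
    then obtain b where b: "x @ u = l @ [b]" using xu by auto
    then obtain v where "x = l @ v \<and> v @ u = [b] \<or> x @ v = l \<and> u = v @ [b]"
      by (auto simp: append_eq_append_conv2)
    then show ?thesis
      using lT is_tree_prefix[OF T, of x] by (cases v) auto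
  qed (use is_tree_prefix[OF T] in blast)
  have children: "(x @ [False] \<in> ?T) = (x @ [True] \<in> ?T)" if x: "x \<in> ?T" for x
  proof (cases "x \<in> T")
    case True
    then show ?thesis using is_tree_children[OF T True] by auto
  next
    case False
    then obtain b where "x = l @ [b]" using x by auto
    then show ?thesis using below[of b "[_]"] by auto
  qed
  show tree': "is_tree ?T"
    unfolding is_tree_def using is_tree_finite[OF T] is_tree_Nil[OF T] prefix children by blast
  show "nodes ?T = insert l (nodes T)"
    using mem_nodes_iff[OF tree'] mem_nodes_iff[OF T] by auto
qed

text \<open>For a lex-increasing list xs, the gap i consists of the words strictly between x_(i-1) and
  x_i, where x_(-1) and x_(length xs) are read as -infinity and +infinity.\<close>

definition in_gap :: "bool list list \<Rightarrow> nat \<Rightarrow> bool list \<Rightarrow> bool" where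
  "in_gap xs i z \<longleftrightarrow>
    (i = 0 \<or> lex_less (xs ! (i - 1)) z) \<and> (i = length xs \<or> lex_less z (xs ! i))"

definition gap_count :: "bool list set \<Rightarrow> bool list list \<Rightarrow> nat \<Rightarrow> nat" where
  "gap_count T xs i = card {z \<in> nodes T. in_gap xs i z}"

definition node_rank :: "bool list set \<Rightarrow> bool list \<Rightarrow> nat" where
  "node_rank T x = card {z \<in> nodes T. lex_less z x}"

lemma in_gap_unique:
  assumes xs: "sorted_wrt lex_less xs" and i: "i \<le> length xs" and i': "i' \<le> length xs"
    and gap: "in_gap xs i z" "in_gap xs i' z"
  shows "i = i'"
proof -
  have False if "k < k'" "k' \<le> length xs" "in_gap xs k z" "in_gap xs k' z" for k k'
  proof -
    have "lex_less z (xs ! k)" "lex_less (xs ! (k' - 1)) z" using that by (auto simp: in_gap_def)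
    moreover have "xs ! k = xs ! (k' - 1) \<or> lex_less (xs ! k) (xs ! (k' - 1))"
      using sorted_wrt_nth_less[OF xs, of k "k' - 1"] that by (cases "k = k' - 1") auto
    ultimately show False using lex_less_trans lex_less_asym by metis
  qed
  then show ?thesis using i i' gap by (metis linorder_neqE_nat)
qed

lemma ex_leaf_in_gap:
  assumes T: "is_tree T" and xs: "sorted_wrt lex_less xs" and sub: "set xs \<subseteq> nodes T"
    and i: "i \<le> length xs"
  shows "\<exists>l\<in>leaves T. in_gap xs i l"
proof -
  have node: "\<exists>j<length (node_list T). xs ! k = node_list T ! j" if "k < length xs" for k
    using that sub node_list_sorted_set[OF T] by (metis in_set_conv_nth nth_mem subsetD)
  have leaf: "leaf_list T ! k \<in> leaves T" if "k < length (leaf_list T)" for k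
    using that leaf_list_sorted_set[OF T] nth_mem by blast
  have len: "length (leaf_list T) = Suc (length (node_list T))"
    using length_node_list[OF T] leaf_list_nonempty[OF T] by (cases "leaf_list T") auto
  show ?thesis
  proof (cases i)
    case 0
    have "lex_less (leaf_list T ! 0) (xs ! 0)" if "0 < length xs"
      using node[OF that] leaf_lex_less_node_iff[OF T] len by auto
    then show ?thesis using 0 leaf[of 0] len by (intro bexI[of _ "leaf_list T ! 0"]) (auto simp: in_gap_def)
  next
    case (Suc i')
    obtain j where j: "j < length (node_list T)" "xs ! i' = node_list T ! j"
      using node[of i'] Suc i by auto
    have "i = length xs \<or> lex_less (leaf_list T ! Suc j) (xs ! i)"
    proof (cases "i = length xs")
      case False
      then have i_less: "i < length xs" using i by simp
      obtain j' where j': "j' < length (node_list T)" "xs ! i = node_list T ! j'"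
        using node[OF i_less] by blast
      have "lex_less (node_list T ! j) (node_list T ! j')"
        using sorted_wrt_nth_less[OF xs _ i_less, of i'] Suc j j' by simp
      then have "j < j'" using sorted_lex_nth_less_iff[OF node_list_sorted_set[OF T, THEN conjunct1] j(1) j'(1)] by simp
      then show ?thesis using leaf_lex_less_node_iff[OF T j'(1)] len j' by simp
    qed simp
    moreover have "lex_less (xs ! i') (leaf_list T ! Suc j)"
      using node_lex_less_leaf_iff[OF T j(1)] len j by simp
    ultimately show ?thesis
      using Suc leaf[of "Suc j"] len j(1) by (intro bexI[of _ "leaf_list T ! Suc j"]) (auto simp: in_gap_def)
  qed
qed

lemma node_rank_first: "0 < length xs \<Longrightarrow> node_rank T (xs ! 0) = gap_count T xs 0"
  by (simp add: node_rank_def gap_count_def in_gap_def)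

lemma card_nodes_gap_count_Nil: "card (nodes T) = gap_count T [] 0"
  by (simp add: gap_count_def in_gap_def)

lemma card_nodes_below_next:
  assumes T: "is_tree T" and xs: "sorted_wrt lex_less xs" and sub: "set xs \<subseteq> nodes T"
    and m: "m < length xs"
  shows "card {z \<in> nodes T. Suc m = length xs \<or> lex_less z (xs ! Suc m)} =
    node_rank T (xs ! m) + 1 + gap_count T xs (Suc m)"
proof -
  have xm: "xs ! m \<in> nodes T" using sub m nth_mem by blast
  have less_next: "lex_less (xs ! m) (xs ! Suc m)" if "Suc m < length xs"
    using sorted_wrt_nth_less[OF xs _ that] by simp
  let ?below = "{z \<in> nodes T. lex_less z (xs ! m)}" and ?gap = "{z \<in> nodes T. in_gap xs (Suc m) z}"
  have "{z \<in> nodes T. Suc m = length xs \<or> lex_less z (xs ! Suc m)} = insert (xs ! m) ?below \<union> ?gap"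
  proof (intro equalityI subsetI)
    fix z assume z: "z \<in> {z \<in> nodes T. Suc m = length xs \<or> lex_less z (xs ! Suc m)}"
    then show "z \<in> insert (xs ! m) ?below \<union> ?gap"
      using lex_less_linear[of z "xs ! m"] by (auto simp: in_gap_def)
  next
    fix z assume "z \<in> insert (xs ! m) ?below \<union> ?gap"
    then show "z \<in> {z \<in> nodes T. Suc m = length xs \<or> lex_less z (xs ! Suc m)}"
      using m xm less_next lex_less_trans[of z "xs ! m" "xs ! Suc m"]
      by (cases "Suc m = length xs") (auto simp: in_gap_def)
  qed
  moreover have "finite (nodes T)" by (rule finite_nodes[OF T])
  moreover have "xs ! m \<notin> ?below" "insert (xs ! m) ?below \<inter> ?gap = {}"
    using lex_less_asym by (auto simp: in_gap_def)
  ultimately show ?thesis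
    by (simp add: card_Un_disjoint node_rank_def gap_count_def)
qed

lemma node_rank_next:
  assumes "is_tree T" "sorted_wrt lex_less xs" "set xs \<subseteq> nodes T" "Suc m < length xs"
  shows "node_rank T (xs ! Suc m) = node_rank T (xs ! m) + 1 + gap_count T xs (Suc m)"
  using card_nodes_below_next[OF assms(1-3), of m] assms(4) by (simp add: node_rank_def)

lemma card_nodes_last:
  assumes "is_tree T" "sorted_wrt lex_less xs" "set xs \<subseteq> nodes T" "Suc m = length xs"
  shows "card (nodes T) = node_rank T (xs ! m) + 1 + gap_count T xs (Suc m)"
  using card_nodes_below_next[OF assms(1-3), of m] assms(4) by simp

lemma node_ranks_eq_if_gap_counts_eq:
  assumes L: "is_tree L" and R: "is_tree R"
    and xs: "sorted_wrt lex_less xs" "set xs \<subseteq> nodes L"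
    and ys: "sorted_wrt lex_less ys" "set ys \<subseteq> nodes R" and len: "length xs = length ys"
    and gaps: "\<And>i. i \<le> length xs \<Longrightarrow> gap_count L xs i = gap_count R ys i"
  shows "\<forall>m<length xs. node_rank L (xs ! m) = node_rank R (ys ! m)"
    and "card (nodes L) = card (nodes R)"
proof -
  show rank: "\<forall>m<length xs. node_rank L (xs ! m) = node_rank R (ys ! m)"
  proof (intro allI impI)
    show "node_rank L (xs ! m) = node_rank R (ys ! m)" if "m < length xs" for m
      using that
    proof (induct m)
      case 0
      then show ?case using node_rank_first[of xs L] node_rank_first[of ys R] gaps len by simp
    next
      case (Suc m)
      then show ?case using node_rank_next[OF L xs Suc.prems] node_rank_next[OF R ys] gaps len by simp
    qed
  qed
  show "card (nodes L) = card (nodes R)"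
  proof (cases "length xs")
    case 0
    then show ?thesis
      using card_nodes_gap_count_Nil[of L] card_nodes_gap_count_Nil[of R] gaps[of 0] len by simp
  next
    case (Suc m)
    then show ?thesis
      using card_nodes_last[OF L xs] card_nodes_last[OF R ys] rank gaps len by simp
  qed
qed

lemma ex_tree_gap_count_Suc:
  assumes T: "is_tree T" and xs: "sorted_wrt lex_less xs" "set xs \<subseteq> nodes T" and i: "i \<le> length xs"
  shows "\<exists>T'. is_tree T' \<and> set xs \<subseteq> nodes T' \<and> gap_count T' xs i = Suc (gap_count T xs i) \<and>
    (\<forall>k\<le>length xs. k \<noteq> i \<longrightarrow> gap_count T' xs k = gap_count T xs k)"
proof -
  obtain l where l: "l \<in> leaves T" "in_gap xs i l" using ex_leaf_in_gap[OF T xs i] by blast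
  define T' where "T' = T \<union> {l @ [False], l @ [True]}"
  have T': "is_tree T'" "nodes T' = insert l (nodes T)"
    using tree_expand_leaf[OF T l(1)] by (simp_all add: T'_def)
  have "l \<notin> nodes T" using l(1) by (simp add: nodes_def)
  then have count: "gap_count T' xs k = (if in_gap xs k l then Suc (gap_count T xs k) else gap_count T xs k)"
    for k
  proof -
    have "{z \<in> nodes T'. in_gap xs k z} =
        (if in_gap xs k l then insert l {z \<in> nodes T. in_gap xs k z} else {z \<in> nodes T. in_gap xs k z})"
      using T'(2) by auto
    then show ?thesis using finite_nodes[OF T] \<open>l \<notin> nodes T\<close> by (simp add: gap_count_def)
  qed
  show ?thesis
    using T' xs(2) count l(2) in_gap_unique[OF xs(1) i _ l(2)] by (intro exI[of _ T']) auto
qed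

lemma ex_tree_gap_counts:
  assumes "is_tree T" "sorted_wrt lex_less xs" "set xs \<subseteq> nodes T"
    and "\<And>i. i \<le> length xs \<Longrightarrow> gap_count T xs i \<le> g i"
  shows "\<exists>T'. is_tree T' \<and> set xs \<subseteq> nodes T' \<and> (\<forall>i\<le>length xs. gap_count T' xs i = g i)"
  using assms
proof (induct "\<Sum>i\<le>length xs. g i - gap_count T xs i" arbitrary: T rule: less_induct)
  case (less T)
  show ?case
  proof (cases "\<forall>i\<le>length xs. gap_count T xs i = g i")
    case False
    then obtain i where i: "i \<le> length xs" "gap_count T xs i < g i"
      using less.prems(4) le_neq_implies_less by blast
    obtain T' where T': "is_tree T'" "set xs \<subseteq> nodes T'" "gap_count T' xs i = Suc (gap_count T xs i)"
      "\<forall>k\<le>length xs. k \<noteq> i \<longrightarrow> gap_count T' xs k = gap_count T xs k"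
      using ex_tree_gap_count_Suc[OF less.prems(1-3) i(1)] by blast
    have le: "gap_count T' xs k \<le> g k" if "k \<le> length xs" for k
      using T'(3,4) i less.prems(4) that by (cases "k = i") auto
    have "(\<Sum>k\<le>length xs. g k - gap_count T' xs k) < (\<Sum>k\<le>length xs. g k - gap_count T xs k)"
    proof (rule sum_strict_mono_ex1)
      show "\<exists>k\<in>{..length xs}. g k - gap_count T' xs k < g k - gap_count T xs k"
        using T'(3) i by (intro bexI[of _ i]) auto
    qed (use T'(3,4) in auto)
    then show ?thesis using less.hyps[OF _ T'(1) less.prems(2) T'(2) le] by blast
  qed (use less.prems in blast)
qed

lemma ex_tree_pair_node_ranks_eq:
  assumes xs: "sorted_wrt lex_less xs" and ys: "sorted_wrt lex_less ys" and len: "length xs = length ys"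
  shows "\<exists>L R. is_tree L \<and> is_tree R \<and> set xs \<subseteq> nodes L \<and> set ys \<subseteq> nodes R \<and>
    length (leaf_list L) = length (leaf_list R) \<and>
    (\<forall>m<length xs. node_rank L (xs ! m) = node_rank R (ys ! m))"
proof -
  obtain L0 where L0: "is_tree L0" "set xs \<subseteq> nodes L0" using ex_tree_nodes_superset[of "set xs"] by auto
  obtain R0 where R0: "is_tree R0" "set ys \<subseteq> nodes R0" using ex_tree_nodes_superset[of "set ys"] by auto
  define g where "g i = max (gap_count L0 xs i) (gap_count R0 ys i)" for i
  obtain L where L: "is_tree L" "set xs \<subseteq> nodes L" "\<forall>i\<le>length xs. gap_count L xs i = g i"
    using ex_tree_gap_counts[OF L0(1) xs L0(2), of g] by (auto simp: g_def)
  obtain R where R: "is_tree R" "set ys \<subseteq> nodes R" "\<forall>i\<le>length ys. gap_count R ys i = g i"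
    using ex_tree_gap_counts[OF R0(1) ys R0(2), of g] by (auto simp: g_def)
  note ranks = node_ranks_eq_if_gap_counts_eq[OF L(1) R(1) xs L(2) ys R(2) len]
  have "length (node_list L) = length (node_list R)"
    using ranks(2) L(3) R(3) len length_lex_enum[OF finite_nodes[OF L(1)]]
      length_lex_enum[OF finite_nodes[OF R(1)]]
    by simp
  then have "length (leaf_list L) = length (leaf_list R)"
    using length_node_list[OF L(1)] length_node_list[OF R(1)]
      leaf_list_nonempty[OF L(1)] leaf_list_nonempty[OF R(1)]
    by (cases "leaf_list L"; cases "leaf_list R") auto
  then show ?thesis using L R ranks(1) L(3) R(3) len by auto
qed

lemma iota_pair_eq_if_node_rank_eq:
  assumes L: "is_tree L" and R: "is_tree R" and x: "x \<in> nodes L" and y: "y \<in> nodes R"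
    and rank: "node_rank L x = node_rank R y"
  shows "iota_pair L R x = y"
proof -
  obtain j where j: "j < length (node_list L)" "x = node_list L ! j"
    using x node_list_sorted_set[OF L] by (metis in_set_conv_nth)
  obtain k where k: "k < length (node_list R)" "y = node_list R ! k"
    using y node_list_sorted_set[OF R] by (metis in_set_conv_nth)
  have "node_rank T (node_list T ! i) = i" if "is_tree T" "i < length (node_list T)" for T i
    using card_lex_less_sorted_nth[of "node_list T" i] node_list_sorted_set[OF that(1)] that(2)
    by (simp add: node_rank_def)
  then have "j = k" using rank j k L R by metis
  then show ?thesis using iota_pair_node[OF L j(1)] j k by simp
qed

theorem lemma3p2:
  fixes n :: nat
  shows "(\<forall>f\<in>thompsonF. \<forall>xs\<in>Sigma_n n. map (iota f) xs \<in> Sigma_n n) \<and>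
         (\<forall>xs\<in>Sigma_n n. \<forall>ys\<in>Sigma_n n. \<exists>f\<in>thompsonF. map (iota f) xs = ys)"
proof (intro conjI ballI)
  fix f xs assume f: "f \<in> thompsonF" and "xs \<in> Sigma_n n"
  then show "map (iota f) xs \<in> Sigma_n n"
    using sorted_wrt_mono_rel[of xs lex_less "\<lambda>x y. lex_less (iota f x) (iota f y)"] iota_lex_mono[OF f]
    by (auto simp: Sigma_n_def sorted_wrt_map)
next
  fix xs ys assume "xs \<in> Sigma_n n" "ys \<in> Sigma_n n"
  then have xs: "sorted_wrt lex_less xs" "length xs = n" and ys: "sorted_wrt lex_less ys" "length ys = n"
    by (auto simp: Sigma_n_def)
  then obtain L R where L: "is_tree L" "set xs \<subseteq> nodes L" and R: "is_tree R" "set ys \<subseteq> nodes R"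
    and len: "length (leaf_list L) = length (leaf_list R)"
    and rank: "\<forall>m<length xs. node_rank L (xs ! m) = node_rank R (ys ! m)"
    using ex_tree_pair_node_ranks_eq[OF xs(1) ys(1)] by force
  have "map (iota_pair L R) xs = ys"
  proof (rule nth_equalityI)
    fix m assume "m < length (map (iota_pair L R) xs)"
    then show "map (iota_pair L R) xs ! m = ys ! m"
      using iota_pair_eq_if_node_rank_eq[OF L(1) R(1)] L(2) R(2) rank xs(2) ys(2)
      by (simp add: nth_mem subset_iff)
  qed (simp add: xs(2) ys(2))
  then show "\<exists>f\<in>thompsonF. map (iota f) xs = ys"
    using tree_pair_map_thompsonF[OF L(1) R(1) len] iota_eq_iota_pair by metis
qed

end
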